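(* Let $\mathbb{F}$ be a finite field with $q$ elements, let $\gamma\in(0,1/2]$, and let $H\subseteq\mathbb{F}^2$ with $|H|=2\gamma q^2$. Let $r$ be an integer with $\frac{2\ln q}{\gamma^2}<r\le\gamma q$. Then there exist subsets $S_1,S_2\subseteq\mathbb{F}$ such that (1) $|S_1|=r$; (2) $|S_2|\ge\gamma q$; (3) $|(\mathbb{F}\times S_2)\cap H|\ge|H|/2=\gamma q^2$; (4) for all $b\in S_2$, $|\{(a,b):a\in\mathbb{F}\}\cap H|\ge\gamma q$; (5) for all $b\in S_2$, $|\{(a,b):a\in S_1\}\cap H|\ge\frac{\gamma}{2}|S_1|$. *)

theory Defs
  imports Complex_Main
begin

end

theory Submission imports Defs "HOL-Probability.Hoeffding" begin

text \<open>
  Call a column \<open>b\<close> heavy if \<open>H\<close> has at least \<open>\<gamma> q\<close> points on it. The light columns carry at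
  most \<open>\<gamma> q\<^sup>2\<close> points of \<open>H\<close>, so the heavy ones carry at least half of \<open>H\<close>, and there are
  at least \<open>\<gamma> q\<close> of them. An \<open>r\<close>-subset \<open>S\<^sub>1\<close> of \<open>\<bbbF>\<close> chosen uniformly at random meets a fixed
  heavy column in fewer than \<open>\<gamma> r / 2\<close> points with probability at most \<open>exp (-\<gamma>\<^sup>2 r / 2)\<close>;
  this Chernoff--Hoeffding bound for sampling without replacement is proved by counting, the
  exponential moment \<open>\<Sum>\<^sub>S (1 + z)\<^bsup>|S \<inter> B|\<^esup>\<close> being dominated by that of sampling with
  replacement. Since \<open>q exp (-\<gamma>\<^sup>2 r / 2) < 1\<close>, a union bound over the at most \<open>q\<close> heavy
  columns leaves some good \<open>S\<^sub>1\<close>.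
\<close>

lemma card_supersets_of_card:
  fixes T :: "'a::finite set"
  shows "card {S. card S = r \<and> T \<subseteq> S} =
           (if card T \<le> r then (CARD('a) - card T) choose (r - card T) else 0)"
proof (cases "card T \<le> r")
  case True
  have "{S. card S = r \<and> T \<subseteq> S} = (\<lambda>R. R \<union> T) ` {R. R \<subseteq> -T \<and> card R = r - card T}"
  proof (intro equalityI subsetI)
    fix S assume "S \<in> {S. card S = r \<and> T \<subseteq> S}"
    then have "S = (S - T) \<union> T" "S - T \<subseteq> -T" "card (S - T) = r - card T"
      by (auto simp: card_Diff_subset)
    then show "S \<in> (\<lambda>R. R \<union> T) ` {R. R \<subseteq> -T \<and> card R = r - card T}" by blast
  next
    fix S assume "S \<in> (\<lambda>R. R \<union> T) ` {R. R \<subseteq> -T \<and> card R = r - card T}"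
    then obtain R where "S = R \<union> T" "R \<subseteq> -T" "card R = r - card T" by blast
    with True show "S \<in> {S. card S = r \<and> T \<subseteq> S}"
      by (auto simp: card_Un_disjoint disjoint_eq_subset_Compl)
  qed
  also have "card \<dots> = card {R. R \<subseteq> -T \<and> card R = r - card T}"
    by (rule card_image) (auto intro!: inj_onI)
  also have "\<dots> = card (-T) choose (r - card T)" by (rule n_subsets) simp
  also have "card (-T) = CARD('a) - card T"
    using card_Diff_subset[of T UNIV] by (simp add: Compl_eq_Diff_UNIV)
  finally show ?thesis using True by simp
next
  case False
  then have "{S. card S = r \<and> T \<subseteq> S} = {}" using card_mono[of _ T] by fastforce
  with False show ?thesis by simp
qed

lemma sum_Pow_by_card:
  fixes f :: "nat \<Rightarrow> 'b::comm_semiring_1"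
  assumes "finite B"
  shows "(\<Sum>T\<in>Pow B. f (card T)) = (\<Sum>t\<le>card B. of_nat (card B choose t) * f t)"
proof -
  have "(\<Sum>T\<in>Pow B. f (card T)) = (\<Sum>t\<le>card B. \<Sum>T\<in>{T\<in>Pow B. card T = t}. f (card T))"
    by (rule sum.group[symmetric]) (use assms in \<open>auto intro: card_mono\<close>)
  also have "\<dots> = (\<Sum>t\<le>card B. of_nat (card B choose t) * f t)"
  proof (rule sum.cong[OF refl])
    fix t
    have "{T\<in>Pow B. card T = t} = {T. T \<subseteq> B \<and> card T = t}" by auto
    then show "(\<Sum>T\<in>{T\<in>Pow B. card T = t}. f (card T)) = of_nat (card B choose t) * f t"
      by (simp add: n_subsets[OF assms])
  qed
  finally show ?thesis .
qed

lemma binomial_le_binomial_mult_ratio_power: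
  assumes "b \<le> q" "0 < q"
  shows "real (b choose t) \<le> real (q choose t) * (real b / real q) ^ t"
proof (induction t)
  case 0 then show ?case by simp
next
  case (Suc t)
  have step: "real (n choose Suc t) = real (n - t) / real (Suc t) * real (n choose t)" for n
    using binomial_absorb_comp[of n t] binomial_absorption[of t n]
    by (simp add: field_simps flip: of_nat_mult)
  have "real (b - t) \<le> real (q - t) * (real b / real q)"
  proof (cases "t \<le> b")
    case True
    have "(real b - real t) * real q \<le> (real q - real t) * real b"
      using assms by (simp add: algebra_simps mult_right_mono)
    with True assms show ?thesis by (simp add: field_simps)
  qed simp
  then have "real (b choose Suc t)
      \<le> real (q - t) * (real b / real q) / real (Suc t) * (real (q choose t) * (real b / real q) ^ t)"
    unfolding step by (intro mult_mono divide_right_mono Suc.IH) auto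
  also have "\<dots> = real (q choose Suc t) * (real b / real q) ^ Suc t"
    unfolding step by (simp add: field_simps)
  finally show ?case .
qed

lemma binomial_mult_binomial_diff_le:
  assumes "t \<le> r" "b \<le> q" "0 < q"
  shows "real (b choose t) * real ((q - t) choose (r - t))
           \<le> real (q choose r) * real (r choose t) * (real b / real q) ^ t"
proof (cases "t \<le> b \<and> r \<le> q")
  case True
  have "real (b choose t) * real ((q - t) choose (r - t))
      \<le> real (q choose t) * (real b / real q) ^ t * real ((q - t) choose (r - t))"
    using assms by (intro mult_right_mono binomial_le_binomial_mult_ratio_power) auto
  also have "\<dots> = real (q choose t) * real ((q - t) choose (r - t)) * (real b / real q) ^ t"
    by (simp add: ac_simps)
  also have "real (q choose t) * real ((q - t) choose (r - t)) = real (q choose r) * real (r choose t)"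
    using choose_mult[of t r q] True assms by (simp flip: of_nat_mult)
  finally show ?thesis .
next
  case False
  with assms have "b choose t = 0 \<or> (q - t) choose (r - t) = 0"
    by (cases "t \<le> b") (auto simp: binomial_eq_0)
  then show ?thesis by (auto simp: binomial_eq_0)
qed

text \<open>
  Expanding \<open>(1 + z)\<^bsup>|S \<inter> B|\<^esup>\<close> over the subsets \<open>T\<close> of \<open>S \<inter> B\<close> and counting the \<open>S\<close> containing
  a given \<open>T\<close> turns the left-hand side into a hypergeometric sum, which is compared termwise with
  the binomial expansion of the right-hand side.
\<close>

lemma sum_power_card_Int_le:
  fixes B :: "'a::finite set" and z :: real
  assumes "0 \<le> z"
  shows "(\<Sum>S | card S = r. (1 + z) ^ card (S \<inter> B))
           \<le> real (CARD('a) choose r) * (1 + z * real (card B) / real CARD('a)) ^ r"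
proof -
  define q where "q = CARD('a)"
  define x where "x = z * real (card B) / real q"
  have q0: "0 < q" and Bq: "card B \<le> q" by (simp_all add: q_def card_mono)
  have "(\<Sum>S | card S = r. (1 + z) ^ card (S \<inter> B))
      = (\<Sum>S | card S = r. \<Sum>T\<in>{T\<in>Pow B. T \<subseteq> S}. z ^ card T)"
  proof (rule sum.cong[OF refl])
    fix S :: "'a set"
    have "Pow (S \<inter> B) = {T\<in>Pow B. T \<subseteq> S}" by auto
    then show "(1 + z) ^ card (S \<inter> B) = (\<Sum>T\<in>{T\<in>Pow B. T \<subseteq> S}. z ^ card T)"
      using prod_add[of "S \<inter> B" "\<lambda>_. z" "\<lambda>_. 1"] by (simp add: add.commute)
  qed
  also have "\<dots> = (\<Sum>T\<in>Pow B. \<Sum>S\<in>{S. card S = r \<and> T \<subseteq> S}. z ^ card T)"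
    by (subst sum.swap_restrict) (auto intro: sum.cong)
  also have "\<dots> = (\<Sum>T\<in>Pow B. z ^ card T *
                    (if card T \<le> r then real ((q - card T) choose (r - card T)) else 0))"
    by (intro sum.cong refl) (simp add: card_supersets_of_card q_def)
  also have "\<dots> = (\<Sum>t\<le>card B. real (card B choose t) *
                    (z ^ t * (if t \<le> r then real ((q - t) choose (r - t)) else 0)))"
    by (rule sum_Pow_by_card) simp
  also have "\<dots> \<le> (\<Sum>t\<le>card B. real (q choose r) * real (r choose t) * x ^ t)"
  proof (rule sum_mono)
    fix t
    show "real (card B choose t) * (z ^ t * (if t \<le> r then real ((q - t) choose (r - t)) else 0))
        \<le> real (q choose r) * real (r choose t) * x ^ t"
    proof (cases "t \<le> r")
      case True
      then have "z ^ t * (real (card B choose t) * real ((q - t) choose (r - t)))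
          \<le> z ^ t * (real (q choose r) * real (r choose t) * (real (card B) / real q) ^ t)"
        using assms Bq q0 by (intro mult_left_mono binomial_mult_binomial_diff_le) auto
      with True show ?thesis by (simp add: x_def power_mult_distrib power_divide ac_simps)
    qed (simp add: binomial_eq_0)
  qed
  also have "\<dots> \<le> (\<Sum>t\<le>card B + r. real (q choose r) * real (r choose t) * x ^ t)"
    using assms by (intro sum_mono2) (auto simp: x_def)
  also have "\<dots> = (\<Sum>t\<le>r. real (q choose r) * real (r choose t) * x ^ t)"
    by (rule sum.mono_neutral_right) auto
  also have "\<dots> = real (q choose r) * (x + 1) ^ r"
    by (simp add: binomial_ring sum_distrib_left mult.assoc)
  finally show ?thesis by (simp add: x_def q_def add.commute)
qed

lemma one_plus_mult_exp_minus_one_le: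
  fixes h p :: real
  assumes "0 \<le> h" "0 \<le> p"
  shows "1 + p * (exp h - 1) \<le> exp (h * p + h\<^sup>2 / 8)"
proof -
  have pos: "0 < 1 + p * (exp h - 1)" using assms by (simp add: add_pos_nonneg)
  have "ln (1 + p * (exp h - 1)) \<le> h * p + h\<^sup>2 / 8"
    using Hoeffdings_lemma_aux[OF assms] by simp
  with pos show ?thesis by (metis exp_le_cancel_iff exp_ln)
qed

lemma card_subsets_sparse_Int_le:
  fixes A :: "'a::finite set" and \<gamma> :: real
  assumes "0 < \<gamma>" "\<gamma> \<le> 1" and dense: "\<gamma> * real CARD('a) \<le> real (card A)"
  shows "real (card {S. card S = r \<and> real (card (S \<inter> A)) < \<gamma> / 2 * real r})
           \<le> real (CARD('a) choose r) * exp (- (\<gamma>\<^sup>2 * real r / 2))"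
proof -
  define q where "q = CARD('a)"
  define Bad where "Bad = {S. card S = r \<and> real (card (S \<inter> A)) < \<gamma> / 2 * real r}"
  define p where "p = real (card (-A)) / real q"
  define m where "m = real r * (1 - \<gamma> / 2)"
  have q0: "0 < q" by (simp add: q_def)
  have "card (-A) = q - card A"
    using card_Diff_subset[of A UNIV] by (simp add: Compl_eq_Diff_UNIV q_def)
  then have p: "0 \<le> p" "p \<le> 1 - \<gamma>"
    using dense q0 card_mono[of UNIV A] by (auto simp: p_def q_def field_simps)
  \<comment> \<open>A sparse \<open>S\<close> has at least \<open>m\<close> points outside \<open>A\<close>;
    Markov's inequality for \<open>exp (2\<gamma>)\<^bsup>|S \<inter> -A|\<^esup>\<close>:\<close>
  have "exp (2 * \<gamma> * m) \<le> exp (2 * \<gamma>) ^ card (S \<inter> -A)" if "S \<in> Bad" for S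
  proof -
    have "card (S \<inter> A) + card (S \<inter> -A) = r"
      using that card_Int_Diff[of S A] by (simp add: Bad_def Diff_eq)
    with that have "m \<le> real (card (S \<inter> -A))"
      by (simp add: Bad_def m_def algebra_simps flip: of_nat_add)
    with assms show ?thesis by (simp add: exp_of_nat_mult[symmetric] mult.commute)
  qed
  then have "real (card Bad) * exp (2 * \<gamma> * m) \<le> (\<Sum>S\<in>Bad. exp (2 * \<gamma>) ^ card (S \<inter> -A))"
    using sum_mono[of Bad "\<lambda>_. exp (2 * \<gamma> * m)"] by simp
  also have "\<dots> \<le> (\<Sum>S | card S = r. exp (2 * \<gamma>) ^ card (S \<inter> -A))"
    by (rule sum_mono2) (auto simp: Bad_def)
  also have "\<dots> \<le> real (q choose r) * (1 + p * (exp (2 * \<gamma>) - 1)) ^ r"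
    using sum_power_card_Int_le[where z = "exp (2 * \<gamma>) - 1" and B = "-A" and r = r] assms
    by (simp add: p_def q_def mult.commute)
  also have "\<dots> \<le> real (q choose r) * exp (2 * \<gamma> * p + \<gamma>\<^sup>2 / 2) ^ r"
    using one_plus_mult_exp_minus_one_le[of "2 * \<gamma>" p] assms p
    by (intro mult_left_mono power_mono) (auto simp: power2_eq_square)
  also have "\<dots> \<le> real (q choose r) * exp (2 * \<gamma> * (1 - \<gamma>) + \<gamma>\<^sup>2 / 2) ^ r"
    using assms p by (intro mult_left_mono power_mono) auto
  also have "exp (2 * \<gamma> * (1 - \<gamma>) + \<gamma>\<^sup>2 / 2) ^ r = exp (- (\<gamma>\<^sup>2 * real r / 2) + 2 * \<gamma> * m)"
    by (simp add: exp_of_nat_mult[symmetric] m_def algebra_simps power2_eq_square)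
  finally have "real (card Bad) * exp (2 * \<gamma> * m)
      \<le> real (q choose r) * exp (- (\<gamma>\<^sup>2 * real r / 2)) * exp (2 * \<gamma> * m)"
    by (simp only: exp_add mult.assoc)
  then show ?thesis unfolding Bad_def q_def by (rule mult_right_le_imp_le) simp
qed

lemma exists_subset_hitting_dense_sets:
  fixes F :: "'a::finite set set" and \<gamma> :: real
  assumes "0 < \<gamma>" "\<gamma> \<le> 1" "r \<le> CARD('a)"
    and dense: "\<And>A. A \<in> F \<Longrightarrow> \<gamma> * real CARD('a) \<le> real (card A)"
    and few: "real (card F) * exp (- (\<gamma>\<^sup>2 * real r / 2)) < 1"
  shows "\<exists>S. card S = r \<and> (\<forall>A\<in>F. \<gamma> / 2 * real r \<le> real (card (S \<inter> A)))"
proof -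
  define Bad where "Bad A = {S :: 'a set. card S = r \<and> real (card (S \<inter> A)) < \<gamma> / 2 * real r}" for A
  define C where "C = real (CARD('a) choose r)"
  have C0: "0 < C" using assms(3) by (simp add: C_def)
  have "real (card (\<Union>A\<in>F. Bad A)) \<le> (\<Sum>A\<in>F. real (card (Bad A)))"
    using card_UN_le[of F Bad] by (simp flip: of_nat_sum)
  also have "\<dots> \<le> (\<Sum>A\<in>F. C * exp (- (\<gamma>\<^sup>2 * real r / 2)))"
    using card_subsets_sparse_Int_le assms dense unfolding Bad_def C_def by (intro sum_mono) blast
  also have "\<dots> = C * (real (card F) * exp (- (\<gamma>\<^sup>2 * real r / 2)))" by simp
  also have "\<dots> < C" using few C0 by simp
  also have "C = real (card {S::'a set. card S = r})"
    using n_subsets[of "UNIV :: 'a set" r] by (simp add: C_def)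
  finally have "\<not> {S::'a set. card S = r} \<subseteq> (\<Union>A\<in>F. Bad A)"
    by (metis card_mono finite not_le of_nat_le_iff)
  then obtain S where "card S = r" "\<forall>A\<in>F. S \<notin> Bad A" by blast
  then show ?thesis by (auto simp: Bad_def not_less)
qed

definition column :: "('a \<times> 'b) set \<Rightarrow> 'b \<Rightarrow> 'a set"
  where "column H b = {a. (a, b) \<in> H}"

lemma card_row_Int: "card ({(a, b) | a. a \<in> X} \<inter> H) = card (X \<inter> column H b)"
proof -
  have "{(a, b) | a. a \<in> X} \<inter> H = (\<lambda>a. (a, b)) ` (X \<inter> column H b)"
    by (auto simp: column_def)
  then show ?thesis by (simp add: card_image inj_on_def)
qed

lemma card_Times_Int_le:
  fixes H :: "('a::finite \<times> 'b::finite) set"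
  shows "card ((UNIV \<times> C) \<inter> H) \<le> card C * CARD('a)"
  by (metis card_cartesian_product card_mono finite inf_le1 mult.commute)

lemma card_light_columns_le:
  fixes H :: "('a::finite \<times> 'b::finite) set" and t :: real
  assumes "0 \<le> t"
  shows "real (card ((UNIV \<times> {b. real (card (column H b)) < t}) \<inter> H)) \<le> t * real CARD('b)"
proof -
  let ?L = "{b. real (card (column H b)) < t}"
  have "(UNIV \<times> ?L) \<inter> H = (\<Union>b\<in>?L. (\<lambda>a. (a, b)) ` column H b)" by (auto simp: column_def)
  then have "card ((UNIV \<times> ?L) \<inter> H) = (\<Sum>b\<in>?L. card ((\<lambda>a. (a, b)) ` column H b))"
    by (simp only:) (rule card_UN_disjoint; auto)
  also have "\<dots> = (\<Sum>b\<in>?L. card (column H b))" by (simp add: card_image inj_on_def)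
  finally have "real (card ((UNIV \<times> ?L) \<inter> H)) = (\<Sum>b\<in>?L. real (card (column H b)))"
    by simp
  also have "\<dots> \<le> (\<Sum>b\<in>?L. t)" by (rule sum_mono) simp
  also have "\<dots> \<le> t * real CARD('b)"
    using assms by (simp add: card_mono mult_left_mono mult.commute)
  finally show ?thesis .
qed

lemma card_heavy_columns_ge:
  fixes H :: "('a::finite \<times> 'b::finite) set" and t :: real
  assumes "0 \<le> t"
  shows "real (card H) - t * real CARD('b)
           \<le> real (card ((UNIV \<times> {b. t \<le> real (card (column H b))}) \<inter> H))"
proof -
  let ?heavy = "(UNIV \<times> {b. t \<le> real (card (column H b))}) \<inter> H"
    and ?light = "(UNIV \<times> {b. real (card (column H b)) < t}) \<inter> H"
  have "H = ?heavy \<union> ?light" by auto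
  moreover have "card (?heavy \<union> ?light) = card ?heavy + card ?light"
    by (rule card_Un_disjoint) auto
  ultimately have "card H = card ?heavy + card ?light" by simp
  with card_light_columns_le[OF assms, of H] show ?thesis by linarith
qed

lemma heavy_columns_large:
  fixes H :: "('a::finite \<times> 'b::finite) set" and \<gamma> :: real
  assumes "0 \<le> \<gamma>" and card_H: "real (card H) = 2 * \<gamma> * real CARD('a) * real CARD('b)"
  defines "S \<equiv> {b. \<gamma> * real CARD('a) \<le> real (card (column H b))}"
  shows "real (card H) / 2 \<le> real (card ((UNIV \<times> S) \<inter> H))"
    and "\<gamma> * real CARD('b) \<le> real (card S)"
proof -
  have "real (card H) - \<gamma> * real CARD('a) * real CARD('b) \<le> real (card ((UNIV \<times> S) \<inter> H))"
    using card_heavy_columns_ge[of "\<gamma> * real CARD('a)" H] assms(1) by (simp add: S_def)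
  with card_H show "real (card H) / 2 \<le> real (card ((UNIV \<times> S) \<inter> H))" by simp
  moreover have "real (card ((UNIV \<times> S) \<inter> H)) \<le> real (card S) * real CARD('a)"
    using card_Times_Int_le[where H = H and C = S] by (simp flip: of_nat_mult)
  moreover have "real (card H) / 2 = \<gamma> * real CARD('b) * real CARD('a)"
    using card_H by (simp add: ac_simps)
  ultimately have "\<gamma> * real CARD('b) * real CARD('a) \<le> real (card S) * real CARD('a)"
    by linarith
  then show "\<gamma> * real CARD('b) \<le> real (card S)" by (rule mult_right_le_imp_le) simp
qed

lemma mult_exp_neg_lt_one:
  fixes q \<gamma> r :: real
  assumes "0 < q" "0 < \<gamma>" "2 * ln q / \<gamma>\<^sup>2 < r"
  shows "q * exp (- (\<gamma>\<^sup>2 * r / 2)) < 1"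
proof -
  have "2 * ln q < r * \<gamma>\<^sup>2" using assms(2,3) by (simp add: pos_divide_less_eq)
  then have neg: "ln q + - (\<gamma>\<^sup>2 * r / 2) < 0" by (simp add: algebra_simps)
  have "q * exp (- (\<gamma>\<^sup>2 * r / 2)) = exp (ln q + - (\<gamma>\<^sup>2 * r / 2))"
    using assms(1) by (simp only: exp_add exp_ln)
  also have "\<dots> < 1" using neg by (simp only: exp_less_one_iff)
  finally show ?thesis .
qed

theorem lemmaA2:
  fixes H :: "('a::{finite,field} \<times> 'a) set"
    and \<gamma> :: real and r :: nat
  defines "q \<equiv> card (UNIV :: 'a set)"
  assumes "0 < \<gamma>" and "\<gamma> \<le> 1/2"
    and "real (card H) = 2 * \<gamma> * real q ^ 2"
    and "2 * ln (real q) / \<gamma>^2 < real r" and "real r \<le> \<gamma> * real q"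
  shows "\<exists>S1 S2 :: 'a set.
           card S1 = r \<and>
           real (card S2) \<ge> \<gamma> * real q \<and>
           real (card ((UNIV \<times> S2) \<inter> H)) \<ge> real (card H) / 2 \<and>
           (\<forall>b\<in>S2. real (card ({(a, b) | a. True} \<inter> H)) \<ge> \<gamma> * real q) \<and>
           (\<forall>b\<in>S2. real (card ({(a, b) | a. a \<in> S1} \<inter> H)) \<ge> \<gamma> / 2 * real (card S1))"
proof -
  define S2 where "S2 = {b. \<gamma> * real q \<le> real (card (column H b))}"
  have "real (card H) = 2 * \<gamma> * real q * real q"
    using assms(4) by (simp add: power2_eq_square)
  then have half: "real (card H) / 2 \<le> real (card ((UNIV \<times> S2) \<inter> H))"
    and many: "\<gamma> * real q \<le> real (card S2)"
    using heavy_columns_large[of \<gamma> H] assms(2) by (simp_all add: S2_def q_def)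
  have "real r \<le> real q"
    using assms(3,6) mult_right_mono[of \<gamma> 1 "real q"] by simp
  then have "r \<le> CARD('a)" by (simp add: q_def)
  have "card (column H ` S2) \<le> q"
    using card_image_le[of S2 "column H"] card_mono[of UNIV S2] by (simp add: q_def)
  then have "real (card (column H ` S2)) * exp (- (\<gamma>\<^sup>2 * real r / 2))
      \<le> real q * exp (- (\<gamma>\<^sup>2 * real r / 2))"
    by (intro mult_right_mono) simp_all
  also have "\<dots> < 1" using assms(2,5) by (intro mult_exp_neg_lt_one) (simp_all add: q_def)
  finally have few: "real (card (column H ` S2)) * exp (- (\<gamma>\<^sup>2 * real r / 2)) < 1" .
  have dense: "\<gamma> * real CARD('a) \<le> real (card A)" if "A \<in> column H ` S2" for A
    using that by (auto simp: S2_def q_def)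
  have "\<gamma> \<le> 1" using assms(3) by simp
  then obtain S1
    where S1: "card S1 = r" "\<forall>A\<in>column H ` S2. \<gamma> / 2 * real r \<le> real (card (S1 \<inter> A))"
    using exists_subset_hitting_dense_sets[OF assms(2) _ \<open>r \<le> CARD('a)\<close> dense few] by blast
  have "\<forall>b\<in>S2. \<gamma> * real q \<le> real (card ({(a, b) | a. True} \<inter> H))"
    using card_row_Int[where X = UNIV and H = H] by (simp add: S2_def)
  moreover have "\<forall>b\<in>S2. \<gamma> / 2 * real (card S1) \<le> real (card ({(a, b) | a. a \<in> S1} \<inter> H))"
    using S1 by (simp add: card_row_Int)
  ultimately show ?thesis
    using S1(1) many half by (intro exI[of _ S1] exI[of _ S2] conjI) simp_all
qed

end
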